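(* There exist a probability space $(\Omega,\mathcal A,\mu)$ with an ergodic bimeasurable invertible measure-preserving map $T$, a function $f\in L^2(\mu)$, and a filtration $(\mathcal F_j)_{j\in\mathbb Z}$ (increasing, with $\mathcal F_j=T^{-j}\mathcal F_0$) such that: (i) $(f\circ T^i)$ is not regular w.r.t. its natural filtration $(\mathcal G_i)$; (ii) $(f\circ T^i)$ has no martingale approximation w.r.t. $(\mathcal G_i)$; (iii) $(f\circ T^i)$ has a martingale approximation w.r.t. $(\mathcal F_i)$.
   Context: $S_n(g)=\sum_{i=0}^{n-1}g\circ T^i$. The natural filtration is $\mathcal G_j=\sigma\{f\circ T^i: i\le j\}$. For a filtration $(\mathcal F_i)$, $\mathcal F_{-\infty}=\bigcap_i\mathcal F_i$ and $\mathcal F_\infty=\sigma(\bigcup_i\mathcal F_i)$. The process $(f\circ T^i)$ is regular w.r.t. $(\mathcal F_i)$ if $f$ is $\mathcal F_\infty$-measurable and $E(f\mid\mathcal F_{-\infty})=0$. It has a martingale approximation w.r.t. $(\mathcal F_i)$ if there exists $m\in L^2(\mathcal F_0)\ominus L^2(\mathcal F_{-1})$ (the orthogonal complement of $L^2(\mathcal F_{-1})$ in $L^2(\mathcal F_0)$) with $n^{-1/2}\|S_n(f-m)\|_2\to0$. *)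

theory Defs
  imports "HOL-Probability.Probability"
begin

definition Tpow :: "'a set \<Rightarrow> ('a \<Rightarrow> 'a) \<Rightarrow> int \<Rightarrow> 'a \<Rightarrow> 'a" where
  "Tpow S T j = (if 0 \<le> j then T ^^ nat j else inv_into S T ^^ nat (- j))"

definition invertible_mpt :: "'a measure \<Rightarrow> ('a \<Rightarrow> 'a) \<Rightarrow> bool" where
  "invertible_mpt M T \<longleftrightarrow>
     T \<in> M \<rightarrow>\<^sub>M M \<and> bij_betw T (space M) (space M) \<and>
     inv_into (space M) T \<in> M \<rightarrow>\<^sub>M M \<and>
     (\<forall>A\<in>sets M. emeasure M (T -` A \<inter> space M) = emeasure M A)"

definition ergodic :: "'a measure \<Rightarrow> ('a \<Rightarrow> 'a) \<Rightarrow> bool" where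
  "ergodic M T \<longleftrightarrow>
     (\<forall>A\<in>sets M. T -` A \<inter> space M = A \<longrightarrow> measure M A = 0 \<or> measure M A = 1)"

definition L2 :: "'a measure \<Rightarrow> 'a measure \<Rightarrow> ('a \<Rightarrow> real) set" where
  "L2 M N = {g. g \<in> borel_measurable N \<and> integrable M (\<lambda>x. (g x)\<^sup>2)}"

definition L2norm :: "'a measure \<Rightarrow> ('a \<Rightarrow> real) \<Rightarrow> real" where
  "L2norm M g = sqrt (\<integral>x. (g x)\<^sup>2 \<partial>M)"

definition Ssum :: "('a \<Rightarrow> 'a) \<Rightarrow> ('a \<Rightarrow> real) \<Rightarrow> nat \<Rightarrow> 'a \<Rightarrow> real" where
  "Ssum T g n = (\<lambda>x. \<Sum>i<n. g ((T ^^ i) x))"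

definition is_filtration :: "'a measure \<Rightarrow> (int \<Rightarrow> 'a measure) \<Rightarrow> bool" where
  "is_filtration M F \<longleftrightarrow>
     (\<forall>j. subalgebra M (F j)) \<and> (\<forall>i j. i \<le> j \<longrightarrow> sets (F i) \<subseteq> sets (F j))"

definition F_minf :: "'a measure \<Rightarrow> (int \<Rightarrow> 'a measure) \<Rightarrow> 'a measure" where
  "F_minf M F = sigma (space M) (\<Inter>j. sets (F j))"

definition F_inf :: "'a measure \<Rightarrow> (int \<Rightarrow> 'a measure) \<Rightarrow> 'a measure" where
  "F_inf M F = sigma (space M) (\<Union>j. sets (F j))"

definition natural_filtration :: "'a measure \<Rightarrow> ('a \<Rightarrow> 'a) \<Rightarrow> ('a \<Rightarrow> real) \<Rightarrow> int \<Rightarrow> 'a measure" where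
  "natural_filtration M T f j = sigma (space M)
     {(\<lambda>x. f (Tpow (space M) T i x)) -` B \<inter> space M | i B. i \<le> j \<and> B \<in> sets borel}"

definition regular :: "'a measure \<Rightarrow> ('a \<Rightarrow> real) \<Rightarrow> (int \<Rightarrow> 'a measure) \<Rightarrow> bool" where
  "regular M f F \<longleftrightarrow>
     f \<in> borel_measurable (F_inf M F) \<and> (AE x in M. real_cond_exp M (F_minf M F) f x = 0)"

definition martingale_approx :: "'a measure \<Rightarrow> ('a \<Rightarrow> 'a) \<Rightarrow> ('a \<Rightarrow> real) \<Rightarrow> (int \<Rightarrow> 'a measure) \<Rightarrow> bool" where
  "martingale_approx M T f F \<longleftrightarrow>
     (\<exists>m. m \<in> L2 M (F 0) \<and>
          (\<forall>g\<in>L2 M (F (-1)). (\<integral>x. m x * g x \<partial>M) = 0) \<and>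
          (\<lambda>n. L2norm M (Ssum T (\<lambda>x. f x - m x) n) / sqrt (real n)) \<longlonglongrightarrow> 0)"

end

theory Submission
  imports Defs
begin

text \<open>
  The example lives on the two-sided Bernoulli shift: \<omega> \<in> {0,1}^\<int> with i.i.d. fair coordinates
  and T the left shift.  Put m(\<omega>) = 2\<omega>_0 - 1, h(\<omega>) = -(\<Sum>k\<ge>0 4^-k \<omega>_k)/3 and
  f = m + h - h \<circ> T.  The value f(\<omega>) = \<Sum>k\<ge>0 4^-k \<omega>_k + 2/3 \<omega>_0 - 1 encodes all the
  digits \<omega>_0, \<omega>_1, ..., so f \<circ> T is a Borel function of f.  Consequently every
  \<sigma>{f \<circ> T^i : i \<le> j} is the same \<sigma>-algebra, which contains f: f is not regular (i), and the
  increment of a martingale approximation for this filtration must vanish, so it would force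
  n^-1/2 \<parallel>S_n f\<parallel>_2 \<rightarrow> 0, contradicting \<parallel>S_n f\<parallel>_2 \<ge> \<surd>n/2 (ii).  For the filtration of the
  past coordinates, m is a martingale difference and f - m is a bounded coboundary (iii).
\<close>

lemma (in finite_measure) measure_diff_le_sym_diff:
  assumes "X \<in> sets M" "Y \<in> sets M"
  shows "\<bar>measure M X - measure M Y\<bar> \<le> measure M (sym_diff X Y)"
proof -
  have "measure M X \<le> measure M (Y \<union> sym_diff X Y)"
    using assms by (intro finite_measure_mono) auto
  also have "\<dots> \<le> measure M Y + measure M (sym_diff X Y)"
    using assms by (intro measure_Un_le) auto
  finally have "measure M X \<le> measure M Y + measure M (sym_diff X Y)" .
  moreover have "measure M Y \<le> measure M (X \<union> sym_diff X Y)"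
    using assms by (intro finite_measure_mono) auto
  moreover have "measure M (X \<union> sym_diff X Y) \<le> measure M X + measure M (sym_diff X Y)"
    using assms by (intro measure_Un_le) auto
  ultimately show ?thesis by linarith
qed

text \<open>A 0-1 law: a set approximated arbitrarily well by two independent events has
  probability 0 or 1, since then P(A) is arbitrarily close to P(A)^2.\<close>
lemma (in prob_space) zero_one_if_approx_self_independent:
  assumes A: "A \<in> events"
    and approx: "\<And>e. e > 0 \<Longrightarrow> \<exists>B\<in>events. \<exists>B'\<in>events.
      prob (sym_diff A B) < e \<and> prob (sym_diff A B') < e \<and> prob (B \<inter> B') = prob B * prob B'"
  shows "prob A = 0 \<or> prob A = 1"
proof -
  define p where "p = prob A"
  have close: "\<bar>p - p\<^sup>2\<bar> \<le> 4 * e" if e: "e > 0" for e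
  proof -
    obtain B B' where B: "B \<in> events" "B' \<in> events" and AB: "prob (sym_diff A B) < e"
      and AB': "prob (sym_diff A B') < e" and ind: "prob (B \<inter> B') = prob B * prob B'"
      using approx[OF e] by blast
    have "prob (sym_diff A (B \<inter> B')) \<le> prob (sym_diff A B \<union> sym_diff A B')"
      using A B by (intro finite_measure_mono) auto
    also have "\<dots> \<le> prob (sym_diff A B) + prob (sym_diff A B')"
      using A B by (intro measure_Un_le) auto
    finally have joint: "\<bar>p - prob B * prob B'\<bar> \<le> 2 * e"
      using measure_diff_le_sym_diff[of A "B \<inter> B'"] A B AB AB' ind unfolding p_def by auto
    have dB: "\<bar>prob B - p\<bar> \<le> e" and dB': "\<bar>prob B' - p\<bar> \<le> e"
      using measure_diff_le_sym_diff[of A B] measure_diff_le_sym_diff[of A B'] A B AB AB'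
      unfolding p_def by (auto simp: abs_minus_commute)
    have "\<bar>(prob B - p) * prob B'\<bar> \<le> e"
      using dB mult_mono[of "\<bar>prob B - p\<bar>" e "prob B'" 1] by (simp add: abs_mult)
    moreover have "\<bar>p * (prob B' - p)\<bar> \<le> e"
      using dB' mult_mono[of p 1 "\<bar>prob B' - p\<bar>" e] unfolding p_def by (simp add: abs_mult)
    moreover have "prob B * prob B' - p\<^sup>2 = (prob B - p) * prob B' + p * (prob B' - p)"
      by (simp add: power2_eq_square algebra_simps)
    ultimately have "\<bar>prob B * prob B' - p\<^sup>2\<bar> \<le> 2 * e" by linarith
    with joint show ?thesis by linarith
  qed
  have "p - p\<^sup>2 = 0"
  proof (rule ccontr)
    assume "p - p\<^sup>2 \<noteq> 0"
    with close[of "\<bar>p - p\<^sup>2\<bar> / 8"] show False by simp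
  qed
  then have "p * (1 - p) = 0" by (simp add: power2_eq_square algebra_simps)
  then show ?thesis unfolding p_def by auto
qed

lemma (in finite_measure) small_tail_of_disjoint_family:
  fixes A :: "nat \<Rightarrow> 'a set"
  assumes A: "range A \<subseteq> sets M" and disj: "disjoint_family A" and e: "e > 0"
  shows "\<exists>K. measure M (\<Union>i\<in>{K..}. A i) < e"
proof -
  define tail where "tail K = (\<Union>i\<in>{K..}. A i)" for K
  have "decseq tail" unfolding tail_def decseq_def by (auto intro: order_trans)
  moreover have "range tail \<subseteq> sets M" using A unfolding tail_def by blast
  moreover have "(\<Inter>K. tail K) = {}"
  proof -
    have False if x: "\<forall>K. x \<in> tail K" for x
    proof -
      obtain i where i: "x \<in> A i" using x[rule_format, of 0] by (auto simp: tail_def)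
      obtain j where j: "j \<ge> Suc i" "x \<in> A j" using x[rule_format, of "Suc i"] by (auto simp: tail_def)
      then have "A i \<inter> A j = {}" using disj by (simp add: disjoint_family_on_def)
      with i j show False by blast
    qed
    then show ?thesis by blast
  qed
  ultimately have "(\<lambda>K. measure M (tail K)) \<longlonglongrightarrow> 0"
    using finite_Lim_measure_decseq[of tail] by simp
  from order_tendstoD(2)[OF this e] show ?thesis
    by (auto simp: tail_def eventually_sequentially)
qed

lemma sym_diff_Union_subset:
  fixes A B :: "nat \<Rightarrow> 'a set"
  shows "sym_diff (\<Union>i. A i) (\<Union>i<K. B i) \<subseteq> (\<Union>i<K. sym_diff (A i) (B i)) \<union> (\<Union>i\<in>{K..}. A i)"
proof
  fix x assume x: "x \<in> sym_diff (\<Union>i. A i) (\<Union>i<K. B i)"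
  show "x \<in> (\<Union>i<K. sym_diff (A i) (B i)) \<union> (\<Union>i\<in>{K..}. A i)"
  proof (cases "x \<in> (\<Union>i. A i)")
    case True
    then obtain i where i: "x \<in> A i" by blast
    show ?thesis
    proof (cases "i < K")
      case True
      then have "x \<in> sym_diff (A i) (B i)" using i x by blast
      with True show ?thesis by blast
    qed (use i in \<open>auto simp: not_less\<close>)
  next
    case False
    then obtain j where "j < K" "x \<in> B j" "x \<notin> A j" using x by blast
    then show ?thesis by blast
  qed
qed

lemma (in finite_measure) approx_disjoint_union:
  fixes A :: "nat \<Rightarrow> 'a set"
  assumes G: "algebra (space M) G" "G \<subseteq> sets M"
    and A: "range A \<subseteq> sets M" "disjoint_family A"
    and approx: "\<And>i e. e > 0 \<Longrightarrow> \<exists>B\<in>G. measure M (sym_diff (A i) B) < e"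
    and e: "e > 0"
  shows "\<exists>B\<in>G. measure M (sym_diff (\<Union>i. A i) B) < e"
proof -
  interpret G: algebra "space M" G by fact
  obtain K where K: "measure M (\<Union>i\<in>{K..}. A i) < e / 2"
    using small_tail_of_disjoint_family[OF A, of "e / 2"] e by auto
  define d where "d = e / (2 * (real K + 1))"
  have "d > 0" using e by (simp add: d_def)
  then have "\<forall>i. \<exists>B. B \<in> G \<and> measure M (sym_diff (A i) B) < d" using approx by blast
  then obtain B where B: "\<And>i. B i \<in> G" "\<And>i. measure M (sym_diff (A i) (B i)) < d"
    by (auto dest!: choice)
  have BM: "B i \<in> sets M" for i using B(1) G(2) by auto
  have AM: "A i \<in> sets M" for i using A(1) by auto
  have head: "(\<Union>i<K. sym_diff (A i) (B i)) \<in> sets M" using AM BM by auto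
  have tail: "(\<Union>i\<in>{K..}. A i) \<in> sets M" using AM by auto
  note sym_diff_Union_subset[where A=A and B=B and K=K]
  then have "measure M (sym_diff (\<Union>i. A i) (\<Union>i<K. B i))
      \<le> measure M ((\<Union>i<K. sym_diff (A i) (B i)) \<union> (\<Union>i\<in>{K..}. A i))"
    by (rule finite_measure_mono[OF _ sets.Un[OF head tail]])
  also have "\<dots> \<le> measure M (\<Union>i<K. sym_diff (A i) (B i)) + measure M (\<Union>i\<in>{K..}. A i)"
    by (rule measure_Un_le[OF head tail])
  also have "\<dots> \<le> (\<Sum>i<K. measure M (sym_diff (A i) (B i))) + measure M (\<Union>i\<in>{K..}. A i)"
    using AM BM by (intro add_mono order_refl finite_measure_subadditive_finite) auto
  also have "\<dots> < real K * d + e / 2"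
  proof -
    have "(\<Sum>i<K. measure M (sym_diff (A i) (B i))) \<le> (\<Sum>i<K. d)"
      using B(2) by (intro sum_mono less_imp_le)
    then show ?thesis using K by simp
  qed
  also have "\<dots> \<le> e" using e by (simp add: d_def field_simps)
  finally have "measure M (sym_diff (\<Union>i. A i) (\<Union>i<K. B i)) < e" .
  moreover have "(\<Union>i<K. B i) \<in> G" using B(1) by (intro G.finite_UN) auto
  ultimately show ?thesis by blast
qed

lemma (in finite_measure) approx_by_generating_algebra:
  assumes alg: "algebra (space M) G" and gen: "sets M = sigma_sets (space M) G"
    and A: "A \<in> sets M" and e: "e > 0"
  shows "\<exists>B\<in>G. measure M (sym_diff A B) < e"
proof -
  interpret G: algebra "space M" G by (rule alg)
  have GM: "G \<subseteq> sets M" using gen by auto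
  have "Int_stable G" by (auto simp: Int_stable_def)
  moreover note G.space_closed
  moreover have "A \<in> sigma_sets (space M) G" using A gen by simp
  ultimately have "\<forall>e>0. \<exists>B\<in>G. measure M (sym_diff A B) < e"
  proof (induct rule: sigma_sets_induct_disjoint)
    case (basic A) then show ?case by (intro allI impI bexI[of _ A]) auto
  next
    case empty then show ?case by (intro allI impI bexI[of _ "{}"]) auto
  next
    case (compl A)
    have "A \<subseteq> space M" using sigma_sets_into_sp[OF G.space_closed compl(1)] .
    then have "sym_diff (space M - A) (space M - B) = sym_diff A B" if "B \<in> G" for B
      using that G.space_closed by auto
    then show ?case using compl(2) G.compl_sets by metis
  next
    case (union A)
    have "range A \<subseteq> sets M" using union(2) gen by auto
    then show ?case using approx_disjoint_union[OF alg GM _ union(1)] union(3) by blast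
  qed
  then show ?thesis using e by blast
qed

lemma AE_funpow_preserving:
  assumes T: "T \<in> M \<rightarrow>\<^sub>M M" and inv: "distr M M T = M" and P: "AE x in M. P x"
  shows "AE x in M. P ((T ^^ n) x)"
proof (induction n)
  case (Suc n)
  have "AE x in distr M M T. P ((T ^^ n) x)" unfolding inv by (rule Suc)
  then show ?case by (auto dest: AE_distrD[OF T] simp del: funpow.simps simp: funpow_Suc_right)
qed (simp add: P)

lemma Ssum_measurable[measurable]:
  assumes T: "T \<in> M \<rightarrow>\<^sub>M M" and g: "g \<in> borel_measurable M"
  shows "Ssum T g n \<in> borel_measurable M"
proof -
  have "(\<lambda>x. g ((T ^^ i) x)) \<in> borel_measurable M" for i
    using measurable_compose[OF measurable_compose_n[OF T] g] .
  then show ?thesis unfolding Ssum_def by (intro borel_measurable_sum) auto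
qed

lemma measurable_F_minf:
  fixes f :: "'a \<Rightarrow> 'b::topological_space"
  assumes F: "is_filtration M F" and f: "\<And>j. f \<in> borel_measurable (F j)"
  shows "f \<in> borel_measurable (F_minf M F)"
proof -
  have sp: "space (F j) = space M" for j using F by (simp add: is_filtration_def subalgebra_def)
  have "(\<Inter>j. sets (F j)) \<subseteq> Pow (space M)"
    using sets.sets_into_space[of _ "F 0"] sp[of 0] by blast
  then have sets: "sets (F_minf M F) = sigma_sets (space M) (\<Inter>j. sets (F j))"
    unfolding F_minf_def by (rule sets_measure_of)
  show ?thesis
  proof (rule measurableI)
    fix B :: "'b set" assume B: "B \<in> sets borel"
    have "f -` B \<inter> space M \<in> sets (F j)" for j
      using measurable_sets[OF f[of j] B] sp[of j] by simp
    then have "f -` B \<inter> space M \<in> (\<Inter>j. sets (F j))" by blast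
    then show "f -` B \<inter> space (F_minf M F) \<in> sets (F_minf M F)"
      unfolding sets by (simp add: F_minf_def space_measure_of_conv sigma_sets.Basic)
  qed (use measurable_space[OF f] sp in \<open>auto simp: F_minf_def space_measure_of_conv\<close>)
qed

text \<open>A regular process whose observable is measurable at -\<infinity> vanishes almost surely,
  because then the conditional expectation at -\<infinity> reproduces it.\<close>
lemma (in prob_space) regular_imp_AE_zero:
  assumes F: "is_filtration M F" and f: "integrable M f"
    and f_minf: "f \<in> borel_measurable (F_minf M F)" and reg: "regular M f F"
  shows "AE x in M. f x = 0"
proof -
  have sp: "space (F j) = space M" and sets: "sets (F j) \<subseteq> sets M" for j
    using F by (auto simp: is_filtration_def subalgebra_def)
  have gen: "(\<Inter>j. sets (F j)) \<subseteq> sets M" using sets[of 0] by blast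
  then have "sets (F_minf M F) = sigma_sets (space M) (\<Inter>j. sets (F j))"
    unfolding F_minf_def using sets.sets_into_space by (intro sets_measure_of) blast
  then have "sets (F_minf M F) \<subseteq> sets M"
    using sets.sigma_sets_subset[OF gen] by simp
  then have "sigma_finite_subalgebra M (F_minf M F)"
    by (intro finite_measure_subalgebra_is_sigma_finite finite_measure_subalgebra.intro
          finite_measure_axioms finite_measure_subalgebra_axioms.intro)
       (simp add: subalgebra_def F_minf_def space_measure_of_conv)
  then have "AE x in M. real_cond_exp M (F_minf M F) f x = f x"
    using f f_minf by (rule sigma_finite_subalgebra.real_cond_exp_F_meas)
  moreover have "AE x in M. real_cond_exp M (F_minf M F) f x = 0"
    using reg by (simp add: regular_def)
  ultimately show ?thesis by eventually_elim simp
qed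

text \<open>If the filtration does not grow from time -1 to 0, the increment m of a martingale
  approximation is orthogonal to itself, hence zero, and the approximation says
  n^-1/2 \<parallel>S_n f\<parallel>_2 \<rightarrow> 0.\<close>
lemma (in prob_space) martingale_approx_constant_filtration:
  assumes F: "is_filtration M F" and const: "sets (F (-1)) = sets (F 0)"
    and T: "T \<in> M \<rightarrow>\<^sub>M M" and inv: "distr M M T = M" and f: "f \<in> borel_measurable M"
    and approx: "martingale_approx M T f F"
  shows "(\<lambda>n. L2norm M (Ssum T f n) / sqrt (real n)) \<longlonglongrightarrow> 0"
proof -
  obtain m where m0: "m \<in> borel_measurable (F 0)" and m2: "integrable M (\<lambda>x. (m x)\<^sup>2)"
    and orth: "\<And>g. g \<in> L2 M (F (-1)) \<Longrightarrow> (\<integral>x. m x * g x \<partial>M) = 0"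
    and lim: "(\<lambda>n. L2norm M (Ssum T (\<lambda>x. f x - m x) n) / sqrt (real n)) \<longlonglongrightarrow> 0"
    using approx unfolding martingale_approx_def L2_def by blast
  have "m \<in> L2 M (F (-1))"
    using m0 m2 measurable_cong_sets[OF const refl] unfolding L2_def by blast
  then have "(\<integral>x. (m x)\<^sup>2 \<partial>M) = 0" using orth by (simp add: power2_eq_square)
  then have m_AE: "AE x in M. m x = 0" using integral_nonneg_eq_0_iff_AE[OF m2] by simp
  have "AE x in M. (Ssum T (\<lambda>x. f x - m x) n x)\<^sup>2 = (Ssum T f n x)\<^sup>2" for n
  proof -
    have "AE x in M. \<forall>i\<in>{..<n}. m ((T ^^ i) x) = 0"
      by (intro AE_finite_allI AE_funpow_preserving[OF T inv m_AE]) auto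
    then show ?thesis by eventually_elim (simp add: Ssum_def)
  qed
  moreover have "m \<in> borel_measurable M"
    using F m0 by (intro measurable_from_subalg[of M "F 0"]) (simp_all add: is_filtration_def)
  then have "(\<lambda>x. (Ssum T h n x)\<^sup>2) \<in> borel_measurable M" if "h \<in> {f, \<lambda>x. f x - m x}" for h n
    using that f Ssum_measurable[OF T, of h n] by auto
  ultimately have "L2norm M (Ssum T (\<lambda>x. f x - m x) n) = L2norm M (Ssum T f n)" for n
    unfolding L2norm_def by (intro arg_cong[where f=sqrt] integral_cong_AE) auto
  then show ?thesis using lim by simp
qed

lemma Ssum_coboundary:
  assumes T: "T \<in> M \<rightarrow>\<^sub>M M" and cob: "\<And>x. x \<in> space M \<Longrightarrow> g x = h x - h (T x)"
    and x: "x \<in> space M"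
  shows "Ssum T g n x = h x - h ((T ^^ n) x)"
proof (induction n)
  case (Suc n)
  have "(T ^^ n) x \<in> space M" using measurable_space[OF measurable_compose_n[OF T] x] .
  with Suc show ?case by (simp add: Ssum_def cob)
qed (simp add: Ssum_def)

lemma (in prob_space) coboundary_negligible:
  assumes T: "T \<in> M \<rightarrow>\<^sub>M M" and h: "h \<in> borel_measurable M"
    and bound: "\<And>x. x \<in> space M \<Longrightarrow> \<bar>h x\<bar> \<le> C"
    and cob: "\<And>x. x \<in> space M \<Longrightarrow> g x = h x - h (T x)"
  shows "(\<lambda>n. L2norm M (Ssum T g n) / sqrt (real n)) \<longlonglongrightarrow> 0"
proof -
  have telescope: "Ssum T g n x = h x - h ((T ^^ n) x)" if "x \<in> space M" for n x
    using T cob that by (rule Ssum_coboundary)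
  have bound_sq: "(Ssum T g n x)\<^sup>2 \<le> (2 * C)\<^sup>2" if "x \<in> space M" for n x
  proof -
    have "(T ^^ n) x \<in> space M" using measurable_space[OF measurable_compose_n[OF T]] that by blast
    then have "\<bar>Ssum T g n x\<bar> \<le> 2 * C"
      using telescope[OF that] bound[OF that] bound[of "(T ^^ n) x"] by simp
    from power_mono[OF this abs_ge_zero, of 2] show ?thesis by simp
  qed
  have g: "g \<in> borel_measurable M"
    using measurable_compose[OF T h] h by (subst measurable_cong[OF cob]) auto
  have L2_bound: "L2norm M (Ssum T g n) \<le> 2 * C" for n
  proof -
    have "(\<integral>x. (Ssum T g n x)\<^sup>2 \<partial>M) \<le> (\<integral>x. (2 * C)\<^sup>2 \<partial>M)"
      using bound_sq T g
      by (intro integral_mono integrable_const_bound[where B="(2 * C)\<^sup>2"]) (auto simp: measurable)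
    then have "L2norm M (Ssum T g n) \<le> sqrt ((2 * C)\<^sup>2)" by (simp add: L2norm_def prob_space)
    also have "\<dots> = 2 * C"
      using bound[of "SOME x. x \<in> space M"] not_empty by (simp add: some_in_eq real_sqrt_mult)
    finally show ?thesis .
  qed
  show ?thesis
  proof (rule tendsto_sandwich[of "\<lambda>_. 0" _ _ "\<lambda>n. 2 * C / sqrt (real n)"])
    show "\<forall>\<^sub>F n in sequentially. 0 \<le> L2norm M (Ssum T g n) / sqrt (real n)"
      by (simp add: L2norm_def)
    show "\<forall>\<^sub>F n in sequentially. L2norm M (Ssum T g n) / sqrt (real n) \<le> 2 * C / sqrt (real n)"
      using L2_bound by (intro always_eventually allI divide_right_mono) auto
    have "(\<lambda>n. (2 * C) * sqrt (1 / real n)) \<longlonglongrightarrow> (2 * C) * sqrt 0"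
      by (intro tendsto_mult tendsto_const tendsto_real_sqrt lim_1_over_n)
    then show "(\<lambda>n. 2 * C / sqrt (real n)) \<longlonglongrightarrow> 0" by (simp add: real_sqrt_divide)
  qed simp
qed

definition coin :: "real measure" where
  "coin = uniform_count_measure {0, 1}"

definition Bern :: "(int \<Rightarrow> real) measure" where
  "Bern = PiM UNIV (\<lambda>_. coin)"

definition shift :: "int \<Rightarrow> (int \<Rightarrow> real) \<Rightarrow> (int \<Rightarrow> real)" where
  "shift j \<omega> = (\<lambda>k. \<omega> (k + j))"

lemma space_coin: "space coin = {0, 1}" and sets_coin: "sets coin = Pow {0, 1}"
  by (auto simp: coin_def space_uniform_count_measure sets_uniform_count_measure)

lemma prob_space_coin: "prob_space coin"
  unfolding coin_def by (rule prob_space_uniform_count_measure) auto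

lemma borel_measurable_coin: "(g :: real \<Rightarrow> real) \<in> borel_measurable coin"
  unfolding coin_def
  by (subst measurable_cong_sets[OF sets_uniform_count_measure_count_space refl]) simp

lemma space_Bern: "space Bern = {\<omega>. \<forall>k. \<omega> k \<in> {0, 1}}"
  by (auto simp: Bern_def space_PiM PiE_UNIV_domain space_coin)

lemma coordinate_01: "\<omega> \<in> space Bern \<Longrightarrow> \<omega> k = 0 \<or> \<omega> k = 1"
  by (auto simp: space_Bern)

lemma prob_space_Bern: "prob_space Bern"
  unfolding Bern_def by (rule prob_space_PiM) (rule prob_space_coin)

interpretation P: prob_space Bern by (rule prob_space_Bern)

lemma measurable_coordinate[measurable]: "(\<lambda>\<omega>. \<omega> i) \<in> Bern \<rightarrow>\<^sub>M coin"
  unfolding Bern_def by (rule measurable_component_singleton) simp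

lemma borel_measurable_coordinate[measurable]:
  "(\<lambda>\<omega>. (g :: real \<Rightarrow> real) (\<omega> i)) \<in> borel_measurable Bern"
  using measurable_compose[OF measurable_coordinate borel_measurable_coin] by simp

lemma distr_coordinate: "distr Bern coin (\<lambda>\<omega>. \<omega> i) = coin"
  unfolding Bern_def by (rule distr_PiM_component) (auto simp: prob_space_coin)

lemma integral_coordinate: "(\<integral>\<omega>. (g :: real \<Rightarrow> real) (\<omega> i) \<partial>Bern) = (g 0 + g 1) / 2"
proof -
  have "(\<integral>\<omega>. g (\<omega> i) \<partial>Bern) = (\<integral>x. g x \<partial>distr Bern coin (\<lambda>\<omega>. \<omega> i))"
    by (rule integral_distr[symmetric]) (auto simp: borel_measurable_coin)
  also have "\<dots> = (g 0 + g 1) / 2"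
    unfolding distr_coordinate by (simp add: coin_def integral_uniform_count_measure)
  finally show ?thesis .
qed

lemma integrable_bounded:
  "g \<in> borel_measurable Bern \<Longrightarrow> (\<And>\<omega>. \<omega> \<in> space Bern \<Longrightarrow> \<bar>g \<omega>\<bar> \<le> (C :: real)) \<Longrightarrow> integrable Bern g"
  by (rule P.integrable_const_bound[where B=C]) auto

lemma shift_in_space: "\<omega> \<in> space Bern \<Longrightarrow> shift j \<omega> \<in> space Bern"
  by (auto simp: space_Bern shift_def)

lemma shift_add: "shift i (shift j \<omega>) = shift (i + j) \<omega>"
  by (auto simp: shift_def algebra_simps)

lemma shift_0[simp]: "shift 0 \<omega> = \<omega>"
  by (simp add: shift_def)

lemma measurable_shift[measurable]: "shift j \<in> Bern \<rightarrow>\<^sub>M Bern"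
proof -
  have "(\<lambda>\<omega> k. \<omega> (k + j)) \<in> Bern \<rightarrow>\<^sub>M PiM UNIV (\<lambda>_. coin)"
    by (rule measurable_PiM_single') (auto simp: space_Bern space_PiM PiE_UNIV_domain space_coin)
  then show ?thesis by (simp add: shift_def[abs_def] Bern_def[symmetric])
qed

lemma distr_shift: "distr Bern Bern (shift j) = Bern"
proof -
  have "distr (PiM UNIV (\<lambda>_. coin)) (PiM UNIV (\<lambda>_. coin)) (\<lambda>\<omega>. \<lambda>n\<in>UNIV. \<omega> (n + j))
      = PiM UNIV (\<lambda>_. coin)"
    by (rule distr_PiM_reindex) (auto simp: prob_space_coin inj_on_def)
  moreover have "(\<lambda>\<omega>. \<lambda>n\<in>UNIV. \<omega> (n + j)) = shift j"
    by (auto simp: shift_def fun_eq_iff)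
  ultimately show ?thesis by (simp add: Bern_def)
qed

lemma measure_shift_preimage:
  "A \<in> sets Bern \<Longrightarrow> measure Bern (shift j -` A \<inter> space Bern) = measure Bern A"
  using measure_distr[OF measurable_shift, of A j] by (simp add: distr_shift)

lemma inv_shift: "\<omega> \<in> space Bern \<Longrightarrow> inv_into (space Bern) (shift 1) \<omega> = shift (-1) \<omega>"
proof (rule inv_into_f_eq)
  show "inj_on (shift 1) (space Bern)"
    by (rule inj_onI) (metis shift_add shift_0 add.commute add.right_inverse)
qed (auto simp: shift_in_space shift_add)

lemma invertible_mpt_shift: "invertible_mpt Bern (shift 1)"
  unfolding invertible_mpt_def
proof (intro conjI ballI)
  show "bij_betw (shift 1) (space Bern) (space Bern)"
    by (rule bij_betw_byWitness[where f'="shift (-1)"]) (auto simp: shift_in_space shift_add)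
  show "inv_into (space Bern) (shift 1) \<in> Bern \<rightarrow>\<^sub>M Bern"
    using measurable_shift[of "-1"] by (rule measurable_cong[THEN iffD1, rotated]) (simp add: inv_shift)
  show "emeasure Bern (shift 1 -` A \<inter> space Bern) = emeasure Bern A" if "A \<in> sets Bern" for A
    using emeasure_distr[OF measurable_shift that] by (simp add: distr_shift)
qed simp

lemma funpow_shift: "\<omega> \<in> space Bern \<Longrightarrow> (shift 1 ^^ n) \<omega> = shift (int n) \<omega>"
  by (induction n arbitrary: \<omega>) (auto simp: shift_add add.commute)

lemma Tpow_shift: "\<omega> \<in> space Bern \<Longrightarrow> Tpow (space Bern) (shift 1) j \<omega> = shift j \<omega>"
proof (cases "0 \<le> j")
  case False
  have "\<omega> \<in> space Bern \<Longrightarrow> (inv_into (space Bern) (shift 1) ^^ n) \<omega> = shift (- int n) \<omega>" for n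
    by (induction n arbitrary: \<omega>) (auto simp: shift_add inv_shift shift_in_space algebra_simps)
  then show "\<omega> \<in> space Bern \<Longrightarrow> ?thesis" using False by (simp add: Tpow_def)
qed (simp add: Tpow_def funpow_shift)

definition coord_gen :: "int set \<Rightarrow> (int \<Rightarrow> real) set set" where
  "coord_gen I = (\<Union>i\<in>I. {(\<lambda>\<omega>. \<omega> i) -` A \<inter> space Bern | A. A \<in> sets coin})"

definition coord_sets :: "int set \<Rightarrow> (int \<Rightarrow> real) set set" where
  "coord_sets I = sigma_sets (space Bern) (coord_gen I)"

lemma coord_gen_subset: "coord_gen I \<subseteq> sets Bern"
  unfolding coord_gen_def using measurable_coordinate by (auto simp: measurable_def)

lemma coord_gen_Pow: "coord_gen I \<subseteq> Pow (space Bern)"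
  using coord_gen_subset sets.sets_into_space by blast

lemma coord_sets_subset: "coord_sets I \<subseteq> sets Bern"
  unfolding coord_sets_def by (rule sets.sigma_sets_subset[OF coord_gen_subset])

lemma coord_gen_mono: "I \<subseteq> J \<Longrightarrow> coord_gen I \<subseteq> coord_gen J"
  unfolding coord_gen_def by blast

lemma coord_sets_mono: "I \<subseteq> J \<Longrightarrow> coord_sets I \<subseteq> coord_sets J"
  unfolding coord_sets_def by (rule sigma_sets_mono'[OF coord_gen_mono])

lemma sets_Bern: "sets Bern = coord_sets UNIV"
proof -
  have "sets Bern = sigma_sets (space Bern)
      {{f\<in>space Bern. f i \<in> A} | i A. i \<in> (UNIV :: int set) \<and> A \<in> sets coin}"
    unfolding Bern_def by (subst sets_PiM_single) (simp add: space_PiM)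
  also have "{{f\<in>space Bern. f i \<in> A} | i A. i \<in> (UNIV :: int set) \<and> A \<in> sets coin}
      = coord_gen UNIV"
    unfolding coord_gen_def by blast
  finally show ?thesis unfolding coord_sets_def .
qed

lemma coordinate_fun_in_coord_sets:
  "(\<lambda>\<omega>. (g :: real \<Rightarrow> real) (\<omega> j)) -` B \<inter> space Bern \<in> coord_sets {j}"
proof -
  have "(\<lambda>\<omega>. g (\<omega> j)) -` B \<inter> space Bern = (\<lambda>\<omega>. \<omega> j) -` (g -` B \<inter> {0, 1}) \<inter> space Bern"
    by (auto simp: space_Bern)
  moreover have "g -` B \<inter> {0, 1} \<in> sets coin" by (auto simp: sets_coin)
  ultimately have "(\<lambda>\<omega>. g (\<omega> j)) -` B \<inter> space Bern \<in> coord_gen {j}"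
    unfolding coord_gen_def by blast
  then show ?thesis unfolding coord_sets_def by (rule sigma_sets.Basic)
qed

lemma borel_measurable_of_coord_sets:
  "(\<And>B. B \<in> sets borel \<Longrightarrow> g -` B \<inter> space Bern \<in> coord_sets I) \<Longrightarrow> g \<in> borel_measurable Bern"
  by (rule measurableI) (use coord_sets_subset in auto)

lemma coord_gen_shift:
  "{shift j -` A \<inter> space Bern | A. A \<in> coord_gen I} = coord_gen ((\<lambda>i. i + j) ` I)"
proof -
  have pre: "shift j -` ((\<lambda>\<omega>. \<omega> i) -` B \<inter> space Bern) \<inter> space Bern
      = (\<lambda>\<omega>. \<omega> (i + j)) -` B \<inter> space Bern" for i B
    using shift_in_space[of _ j] by (auto simp: shift_def)
  show ?thesis
  proof (intro set_eqI iffI)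
    fix X assume "X \<in> {shift j -` A \<inter> space Bern | A. A \<in> coord_gen I}"
    then obtain i B where "i \<in> I" "B \<in> sets coin"
      "X = shift j -` ((\<lambda>\<omega>. \<omega> i) -` B \<inter> space Bern) \<inter> space Bern"
      unfolding coord_gen_def by blast
    then show "X \<in> coord_gen ((\<lambda>i. i + j) ` I)" unfolding coord_gen_def pre by blast
  next
    fix X assume "X \<in> coord_gen ((\<lambda>i. i + j) ` I)"
    then obtain i B where "i \<in> I" "B \<in> sets coin" "X = (\<lambda>\<omega>. \<omega> (i + j)) -` B \<inter> space Bern"
      unfolding coord_gen_def by blast
    then show "X \<in> {shift j -` A \<inter> space Bern | A. A \<in> coord_gen I}"
      unfolding coord_gen_def pre[symmetric] by blast
  qed
qed

lemma coord_sets_shift: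
  "{shift j -` A \<inter> space Bern | A. A \<in> coord_sets I} = coord_sets ((\<lambda>i. i + j) ` I)"
proof -
  have "shift j \<in> space Bern \<rightarrow> space Bern" using shift_in_space by auto
  then show ?thesis
    unfolding coord_sets_def by (subst sigma_sets_vimage_commute) (auto simp: coord_gen_shift)
qed

lemma indep_coordinates: "P.indep_vars (\<lambda>_. coin) (\<lambda>i \<omega>. \<omega> i) UNIV"
proof (subst P.indep_vars_iff_distr_eq_PiM)
  have "distr Bern (Pi\<^sub>M UNIV (\<lambda>i. coin)) (\<lambda>x. \<lambda>i\<in>UNIV. x i) = Bern"
    by (simp add: Bern_def[symmetric] distr_id2 restrict_UNIV)
  then show "distr Bern (Pi\<^sub>M UNIV (\<lambda>i. coin)) (\<lambda>x. \<lambda>i\<in>UNIV. x i)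
      = Pi\<^sub>M UNIV (\<lambda>i. distr Bern coin (\<lambda>\<omega>. \<omega> i))"
    by (simp only: distr_coordinate) (simp add: Bern_def)
qed auto

lemma indep_coord_sets:
  assumes "I \<inter> J = {}"
  shows "P.indep_set (coord_sets I) (coord_sets J)"
proof -
  let ?E = "\<lambda>i. {(\<lambda>\<omega>. \<omega> i) -` A \<inter> space Bern | A. A \<in> sets coin}"
  have "P.indep_sets ?E UNIV"
    using indep_coordinates unfolding P.indep_vars_def2 by simp
  then have ind: "P.indep_sets ?E (\<Union>b\<in>UNIV. case_bool I J b)"
    by (rule P.indep_sets_mono_index[rotated]) auto
  have "P.indep_sets (\<lambda>b. sigma_sets (space Bern) (\<Union>i\<in>case_bool I J b. ?E i)) UNIV"
  proof (rule P.indep_sets_collect_sigma[OF ind])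
    show "Int_stable (?E i)" for i
    proof (rule Int_stableI)
      fix a b assume "a \<in> ?E i" "b \<in> ?E i"
      then obtain A B where "A \<subseteq> {0, 1}" "B \<subseteq> {0, 1}"
        "a = (\<lambda>\<omega>. \<omega> i) -` A \<inter> space Bern" "b = (\<lambda>\<omega>. \<omega> i) -` B \<inter> space Bern"
        by (auto simp: sets_coin)
      then have "a \<inter> b = (\<lambda>\<omega>. \<omega> i) -` (A \<inter> B) \<inter> space Bern" "A \<inter> B \<in> sets coin"
        by (auto simp: sets_coin)
      then show "a \<inter> b \<in> ?E i" by blast
    qed
    show "disjoint_family_on (case_bool I J) UNIV"
      using assms by (auto simp: disjoint_family_on_def split: bool.split)
  qed
  then show ?thesis
    unfolding P.indep_set_def
    by (rule P.indep_sets_cong[THEN iffD1, rotated -1])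
       (auto simp: coord_sets_def coord_gen_def split: bool.split)
qed

lemma integral_mult_indep_coords:
  fixes X Y :: "(int \<Rightarrow> real) \<Rightarrow> real"
  assumes IJ: "I \<inter> J = {}"
    and X: "\<And>B. B \<in> sets borel \<Longrightarrow> X -` B \<inter> space Bern \<in> coord_sets I" "integrable Bern X"
    and Y: "\<And>B. B \<in> sets borel \<Longrightarrow> Y -` B \<inter> space Bern \<in> coord_sets J" "integrable Bern Y"
  shows "(\<integral>\<omega>. X \<omega> * Y \<omega> \<partial>Bern) = (\<integral>\<omega>. X \<omega> \<partial>Bern) * (\<integral>\<omega>. Y \<omega> \<partial>Bern)"
proof (rule P.indep_var_lebesgue_integral[OF _ X(2) Y(2)])
  have ind: "P.indep_sets (case_bool (coord_sets I) (coord_sets J)) UNIV"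
    using indep_coord_sets[OF IJ] unfolding P.indep_set_def .
  show "P.indep_var borel X borel Y"
    unfolding P.indep_var_def P.indep_vars_def2
  proof
    show "\<forall>i\<in>UNIV. P.random_variable (case_bool borel borel i) (case_bool X Y i)"
      using borel_measurable_of_coord_sets[OF X(1)] borel_measurable_of_coord_sets[OF Y(1)]
      by (simp split: bool.split)
    show "P.indep_sets (\<lambda>i. {case_bool X Y i -` A \<inter> space Bern |A. A \<in> sets (case_bool borel borel i)}) UNIV"
      by (rule P.indep_sets_mono_sets[OF ind]) (use X Y in \<open>auto split: bool.split\<close>)
  qed
qed

definition cylinders :: "(int \<Rightarrow> real) set set" where
  "cylinders = (\<Union>N::nat. coord_sets {- int N..int N})"

lemma cylinders_upward:
  assumes "a \<in> cylinders"
  shows "\<exists>N. \<forall>N'\<ge>N. a \<in> coord_sets {- int N'..int N'}"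
proof -
  obtain N where "a \<in> coord_sets {- int N..int N}" using assms unfolding cylinders_def by blast
  moreover have "coord_sets {- int N..int N} \<subseteq> coord_sets {- int N'..int N'}" if "N' \<ge> N" for N'
    using that by (intro coord_sets_mono) auto
  ultimately show ?thesis by blast
qed

lemma algebra_cylinders: "algebra (space Bern) cylinders"
  unfolding algebra_iff_Un
proof (intro conjI ballI)
  show "cylinders \<subseteq> Pow (space Bern)"
    unfolding cylinders_def using coord_sets_subset sets.sets_into_space by blast
  have "{} \<in> coord_sets {- int 0..int 0}" by (simp add: coord_sets_def sigma_sets.Empty)
  then show "{} \<in> cylinders" unfolding cylinders_def by blast
  fix a assume "a \<in> cylinders"
  then obtain N where "a \<in> coord_sets {- int N..int N}" unfolding cylinders_def by auto
  then have "space Bern - a \<in> coord_sets {- int N..int N}"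
    unfolding coord_sets_def by (rule sigma_sets.Compl)
  then show "space Bern - a \<in> cylinders" unfolding cylinders_def by blast
  fix b assume "b \<in> cylinders"
  obtain N1 N2 where "\<forall>N'\<ge>N1. a \<in> coord_sets {- int N'..int N'}"
    and "\<forall>N'\<ge>N2. b \<in> coord_sets {- int N'..int N'}"
    using cylinders_upward[OF \<open>a \<in> cylinders\<close>] cylinders_upward[OF \<open>b \<in> cylinders\<close>] by blast
  then have "a \<in> coord_sets {- int (max N1 N2)..int (max N1 N2)}"
    "b \<in> coord_sets {- int (max N1 N2)..int (max N1 N2)}" by simp_all
  then have "a \<union> b \<in> coord_sets {- int (max N1 N2)..int (max N1 N2)}"
    unfolding coord_sets_def by (rule sigma_sets_Un)
  then show "a \<union> b \<in> cylinders" unfolding cylinders_def by blast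
qed

lemma sets_Bern_cylinders: "sets Bern = sigma_sets (space Bern) cylinders"
  unfolding sets_Bern coord_sets_def[of UNIV]
proof (rule sigma_sets_eqI)
  fix a assume "a \<in> coord_gen UNIV"
  then obtain i where "a \<in> coord_gen {i}" unfolding coord_gen_def by auto
  moreover have "coord_gen {i} \<subseteq> coord_sets {- int (nat \<bar>i\<bar>)..int (nat \<bar>i\<bar>)}"
  proof -
    have "coord_gen {i} \<subseteq> coord_gen {- int (nat \<bar>i\<bar>)..int (nat \<bar>i\<bar>)}"
      by (rule coord_gen_mono) auto
    then show ?thesis unfolding coord_sets_def using sigma_sets_superset_generator by blast
  qed
  ultimately show "a \<in> sigma_sets (space Bern) cylinders"
    unfolding cylinders_def by (blast intro: sigma_sets.Basic)
next
  fix b assume "b \<in> cylinders"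
  then show "b \<in> sigma_sets (space Bern) (coord_gen UNIV)"
    unfolding cylinders_def using coord_sets_mono[of _ UNIV] by (auto simp: coord_sets_def)
qed

lemma shift_invariant_pow:
  assumes inv: "shift 1 -` A \<inter> space Bern = A"
  shows "shift (int n) -` A \<inter> space Bern = A"
proof (induction n)
  case 0
  show ?case using inv by auto
next
  case (Suc n)
  have "shift (int (Suc n)) -` A \<inter> space Bern = {\<omega> \<in> space Bern. shift (int n) \<omega> \<in> shift 1 -` A \<inter> space Bern}"
    using shift_in_space by (auto simp: shift_add add.commute)
  with Suc inv show ?case by auto
qed

text \<open>Ergodicity: an invariant set is approximated by a cylinder B, and equally well by a shift
  of B far enough to be independent of B.\<close>

lemma ergodic_shift: "ergodic Bern (shift 1)"
  unfolding ergodic_def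
proof (intro ballI impI)
  fix A assume A: "A \<in> sets Bern" and inv: "shift 1 -` A \<inter> space Bern = A"
  show "measure Bern A = 0 \<or> measure Bern A = 1"
  proof (rule P.zero_one_if_approx_self_independent[OF A])
    fix e :: real assume "e > 0"
    then obtain B where "B \<in> cylinders" and AB: "measure Bern (sym_diff A B) < e"
      using P.approx_by_generating_algebra[OF algebra_cylinders sets_Bern_cylinders A] by blast
    then obtain N where B: "B \<in> coord_sets {- int N..int N}" unfolding cylinders_def by auto
    define n where "n = 2 * int N + 1"
    define B' where "B' = shift n -` B \<inter> space Bern"
    have B': "B' \<in> coord_sets ((\<lambda>i. i + n) ` {- int N..int N})"
      using B coord_sets_shift[of n] unfolding B'_def by blast
    have disj: "{- int N..int N} \<inter> (\<lambda>i. i + n) ` {- int N..int N} = {}" unfolding n_def by auto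
    have "shift n -` A \<inter> space Bern = A"
      using shift_invariant_pow[OF inv, of "nat n"] by (simp add: n_def)
    then have "sym_diff A B' = shift n -` sym_diff A B \<inter> space Bern" unfolding B'_def by auto
    moreover have "sym_diff A B \<in> sets Bern" using A B coord_sets_subset by blast
    ultimately have "measure Bern (sym_diff A B') = measure Bern (sym_diff A B)"
      by (simp only: measure_shift_preimage)
    moreover have "measure Bern (B \<inter> B') = measure Bern B * measure Bern B'"
      using P.indep_setD[OF indep_coord_sets[OF disj] B B'] by simp
    ultimately show "\<exists>B\<in>P.events. \<exists>B'\<in>P.events. measure Bern (sym_diff A B) < e \<and>
        measure Bern (sym_diff A B') < e \<and> measure Bern (B \<inter> B') = measure Bern B * measure Bern B'"
      using AB B[THEN coord_sets_subset[THEN subsetD]] B'[THEN coord_sets_subset[THEN subsetD]]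
      by (intro bexI[of _ B] bexI[of _ B'] conjI) simp_all
  qed
qed

definition base4 :: "(int \<Rightarrow> real) \<Rightarrow> real" where
  "base4 \<omega> = (\<Sum>k. (1/4)^k * \<omega> (int k))"

definition incr :: "(int \<Rightarrow> real) \<Rightarrow> real" where
  "incr \<omega> = 2 * \<omega> 0 - 1"

definition cobound :: "(int \<Rightarrow> real) \<Rightarrow> real" where
  "cobound \<omega> = - base4 \<omega> / 3"

definition f_ex :: "(int \<Rightarrow> real) \<Rightarrow> real" where
  "f_ex \<omega> = incr \<omega> + cobound \<omega> - cobound (shift 1 \<omega>)"

lemma base4_sums:
  assumes "\<omega> \<in> space Bern"
  shows "(\<lambda>k. (1/4)^k * \<omega> (int k)) sums base4 \<omega>"
proof -
  have "summable (\<lambda>k. (1/4::real)^k * \<omega> (int k))"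
  proof (rule summable_comparison_test'[where g="\<lambda>k. (1/4)^k"])
    show "summable (\<lambda>k. (1/4::real)^k)" by (rule summable_geometric) simp
    show "norm ((1/4::real)^n * \<omega> (int n)) \<le> (1/4)^n" for n
      using coordinate_01[OF assms, of "int n"] by auto
  qed
  then show ?thesis unfolding base4_def by (rule summable_sums)
qed

lemma base4_bounds:
  assumes \<omega>: "\<omega> \<in> space Bern"
  shows "0 \<le> base4 \<omega>" "base4 \<omega> \<le> 4/3"
proof -
  have lo: "0 \<le> (1/4::real)^k * \<omega> (int k)" and hi: "(1/4::real)^k * \<omega> (int k) \<le> (1/4)^k" for k
    using coordinate_01[OF \<omega>, of "int k"] by auto
  show "0 \<le> base4 \<omega>" using sums_le[OF lo sums_zero base4_sums[OF \<omega>]] .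
  have "(\<lambda>k. (1/4::real)^k) sums (4/3)" using geometric_sums[of "1/4::real"] by simp
  then show "base4 \<omega> \<le> 4/3" by (rule sums_le[OF hi base4_sums[OF \<omega>]])
qed

lemma base4_shift:
  assumes \<omega>: "\<omega> \<in> space Bern"
  shows "base4 \<omega> = \<omega> 0 + base4 (shift 1 \<omega>) / 4"
proof -
  have "(\<lambda>k. (1/4) * ((1/4)^k * shift 1 \<omega> (int k))) sums ((1/4) * base4 (shift 1 \<omega>))"
    by (rule sums_mult[OF base4_sums[OF shift_in_space[OF \<omega>]]])
  moreover have "(\<lambda>k. (1/4) * ((1/4)^k * shift 1 \<omega> (int k))) = (\<lambda>k. (1/4::real)^(Suc k) * \<omega> (int (Suc k)))"
    by (auto simp: shift_def fun_eq_iff add.commute)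
  ultimately have "(\<lambda>k. (1/4::real)^(Suc k) * \<omega> (int (Suc k))) sums ((1/4) * base4 (shift 1 \<omega>))"
    by simp
  then have "(\<lambda>k. (1/4::real)^k * \<omega> (int k)) sums ((1/4) * base4 (shift 1 \<omega>) + (1/4)^0 * \<omega> (int 0))"
    by (subst (asm) sums_Suc_iff) simp
  with base4_sums[OF \<omega>] show ?thesis by (simp add: sums_unique2 ac_simps)
qed

text \<open>Closed form of f_ex: it reads off all future digits of \<omega>.\<close>
lemma f_ex_eq: "\<omega> \<in> space Bern \<Longrightarrow> f_ex \<omega> = base4 \<omega> + 2/3 * \<omega> 0 - 1"
  using base4_shift[of \<omega>] by (simp add: f_ex_def cobound_def incr_def field_simps)

lemma f_ex_bounds:
  assumes \<omega>: "\<omega> \<in> space Bern"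
  shows "f_ex \<omega> \<noteq> 0" "\<bar>f_ex \<omega>\<bar> \<le> 2"
proof -
  have "0 \<le> base4 (shift 1 \<omega>)" "base4 (shift 1 \<omega>) \<le> 4/3"
    using base4_bounds[OF shift_in_space[OF \<omega>]] by auto
  moreover have "f_ex \<omega> = 5/3 * \<omega> 0 + base4 (shift 1 \<omega>) / 4 - 1"
    using f_ex_eq[OF \<omega>] base4_shift[OF \<omega>] by simp
  ultimately show "f_ex \<omega> \<noteq> 0" "\<bar>f_ex \<omega>\<bar> \<le> 2" using coordinate_01[OF \<omega>, of 0] by auto
qed

lemma cobound_bound: "\<omega> \<in> space Bern \<Longrightarrow> \<bar>cobound \<omega>\<bar> \<le> 4/9"
  using base4_bounds[of \<omega>] by (simp add: cobound_def)

lemma base4_measurable[measurable]: "base4 \<in> borel_measurable Bern"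
  unfolding base4_def by measurable

lemma cobound_measurable[measurable]: "cobound \<in> borel_measurable Bern"
  unfolding cobound_def by measurable

lemma incr_measurable[measurable]: "incr \<in> borel_measurable Bern"
  unfolding incr_def by measurable

lemma f_ex_measurable[measurable]: "f_ex \<in> borel_measurable Bern"
  unfolding f_ex_def by measurable

lemma f_ex_L2: "f_ex \<in> L2 Bern Bern"
proof -
  have "\<bar>(f_ex \<omega>)\<^sup>2\<bar> \<le> 2\<^sup>2" if "\<omega> \<in> space Bern" for \<omega>
    using power_mono[OF f_ex_bounds(2)[OF that] abs_ge_zero, of 2] by simp
  then show ?thesis unfolding L2_def by (auto intro: integrable_bounded[where C=4])
qed

text \<open>next_value decodes \<omega>_0 and base4 (shift 1 \<omega>) from f_ex \<omega> and recomputes f_ex at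
  the next time.\<close>
definition next_value :: "real \<Rightarrow> real" where
  "next_value y = (let a = (if y + 1 \<ge> 1 then 1 else 0 :: real); s = 4 * (y + 1 - 5/3 * a);
      b = (if s \<ge> 1 then 1 else 0 :: real) in s + 2/3 * b - 1)"

lemma next_value_measurable[measurable]: "next_value \<in> borel_measurable borel"
  unfolding next_value_def Let_def by measurable

lemma f_ex_shift:
  assumes \<omega>: "\<omega> \<in> space Bern"
  shows "f_ex (shift 1 \<omega>) = next_value (f_ex \<omega>)"
proof -
  let ?\<omega>' = "shift 1 \<omega>"
  have \<omega>': "?\<omega>' \<in> space Bern" by (rule shift_in_space[OF \<omega>])
  have val: "f_ex \<omega> + 1 = 5/3 * \<omega> 0 + base4 ?\<omega>' / 4"
    using f_ex_eq[OF \<omega>] base4_shift[OF \<omega>] by simp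
  have "0 \<le> base4 ?\<omega>'" "base4 ?\<omega>' \<le> 4/3" using base4_bounds[OF \<omega>'] by auto
  then have digit0: "(if f_ex \<omega> + 1 \<ge> 1 then 1 else 0 :: real) = \<omega> 0"
    using val coordinate_01[OF \<omega>, of 0] by auto
  have rest: "4 * (f_ex \<omega> + 1 - 5/3 * \<omega> 0) = base4 ?\<omega>'" using val by simp
  have "0 \<le> base4 (shift 1 ?\<omega>')" "base4 (shift 1 ?\<omega>') \<le> 4/3"
    using base4_bounds[OF shift_in_space[OF \<omega>']] by auto
  then have digit1: "(if base4 ?\<omega>' \<ge> 1 then 1 else 0 :: real) = ?\<omega>' 0"
    using base4_shift[OF \<omega>'] coordinate_01[OF \<omega>', of 0] by auto
  show ?thesis unfolding next_value_def Let_def digit0 rest digit1 f_ex_eq[OF \<omega>'] ..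
qed

definition past_gen :: "int \<Rightarrow> (int \<Rightarrow> real) set set" where
  "past_gen j = {(\<lambda>x. f_ex (shift i x)) -` B \<inter> space Bern | i B. i \<le> j \<and> B \<in> sets borel}"

abbreviation nat_filt :: "int \<Rightarrow> (int \<Rightarrow> real) measure" where
  "nat_filt \<equiv> natural_filtration Bern (shift 1) f_ex"

lemma past_gen_Pow: "past_gen j \<subseteq> Pow (space Bern)"
  unfolding past_gen_def by auto

lemma sets_nat_filt: "sets (nat_filt j) = sigma_sets (space Bern) (past_gen j)"
  and space_nat_filt: "space (nat_filt j) = space Bern"
proof -
  have "(\<lambda>x. f_ex (Tpow (space Bern) (shift 1) i x)) -` B \<inter> space Bern
      = (\<lambda>x. f_ex (shift i x)) -` B \<inter> space Bern" for i B
    by (auto simp: Tpow_shift)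
  then have eq: "nat_filt j = sigma (space Bern) (past_gen j)"
    unfolding natural_filtration_def past_gen_def by simp
  show "sets (nat_filt j) = sigma_sets (space Bern) (past_gen j)"
    unfolding eq by (rule sets_measure_of[OF past_gen_Pow])
  show "space (nat_filt j) = space Bern"
    unfolding eq by (simp add: space_measure_of_conv)
qed

lemma past_gen_mono: "j \<le> k \<Longrightarrow> past_gen j \<subseteq> past_gen k"
  unfolding past_gen_def by fastforce

text \<open>Since each value determines the next, the past up to j - 1 already contains the value at j:
  the natural filtration is constant.\<close>

lemma past_gen_pred: "past_gen j \<subseteq> past_gen (j - 1)"
proof
  fix X assume "X \<in> past_gen j"
  then obtain i B where iB: "i \<le> j" "B \<in> sets borel" "X = (\<lambda>x. f_ex (shift i x)) -` B \<inter> space Bern"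
    unfolding past_gen_def by blast
  have "f_ex (shift i x) = next_value (f_ex (shift (i - 1) x))" if "x \<in> space Bern" for x
    using f_ex_shift[OF shift_in_space[OF that, of "i - 1"]] by (simp add: shift_add)
  then have "X = (\<lambda>x. f_ex (shift (i - 1) x)) -` (next_value -` B) \<inter> space Bern"
    using iB(3) by auto
  moreover have "next_value -` B \<in> sets borel"
    using measurable_sets[OF next_value_measurable iB(2)] by simp
  ultimately show "X \<in> past_gen (j - 1)"
    unfolding past_gen_def using iB(1) by (intro CollectI exI[of _ "i - 1"] exI[of _ "next_value -` B"]) simp
qed

lemma past_gen_const: "past_gen j \<subseteq> past_gen k"
proof (cases "j \<le> k")
  case False
  have "past_gen j \<subseteq> past_gen (j - int n)" for n
  proof (induction n)
    case (Suc n)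
    with past_gen_pred[of "j - int n"] show ?case by (simp add: algebra_simps)
  qed simp
  from this[of "nat (j - k)"] False show ?thesis by simp
qed (rule past_gen_mono)

lemma is_filtration_nat_filt: "is_filtration Bern nat_filt"
  unfolding is_filtration_def
proof (intro conjI allI impI)
  have "past_gen j \<subseteq> sets Bern" for j
    unfolding past_gen_def using measurable_compose[OF measurable_shift f_ex_measurable]
    by (auto simp: measurable_def)
  then show "subalgebra Bern (nat_filt j)" for j
    unfolding subalgebra_def by (simp add: sets_nat_filt space_nat_filt sets.sigma_sets_subset)
  show "sets (nat_filt i) \<subseteq> sets (nat_filt j)" for i j
    unfolding sets_nat_filt by (rule sigma_sets_mono'[OF past_gen_const])
qed

lemma f_ex_measurable_nat_filt: "f_ex \<in> borel_measurable (nat_filt j)"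
proof (rule measurableI)
  fix B :: "real set" assume "B \<in> sets borel"
  then have "f_ex -` B \<inter> space Bern \<in> past_gen 0"
    unfolding past_gen_def by (intro CollectI exI[of _ 0] exI[of _ B]) simp
  then have "f_ex -` B \<inter> space Bern \<in> past_gen j" using past_gen_const by blast
  then show "f_ex -` B \<inter> space (nat_filt j) \<in> sets (nat_filt j)"
    by (simp add: sets_nat_filt space_nat_filt sigma_sets.Basic)
qed (simp add: space_nat_filt)

lemma f_ex_not_regular: "\<not> regular Bern f_ex nat_filt"
proof
  assume "regular Bern f_ex nat_filt"
  moreover have "integrable Bern f_ex"
    using f_ex_bounds(2) by (intro integrable_bounded[where C=2]) auto
  ultimately have "AE \<omega> in Bern. f_ex \<omega> = 0"
    using P.regular_imp_AE_zero[OF is_filtration_nat_filt]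
      measurable_F_minf[OF is_filtration_nat_filt f_ex_measurable_nat_filt] by blast
  then have "AE \<omega> in Bern. False" using f_ex_bounds(1) by (auto elim: AE_mp)
  then show False by (simp add: P.AE_False)
qed

definition rademacher_sum :: "nat \<Rightarrow> (int \<Rightarrow> real) \<Rightarrow> real" where
  "rademacher_sum n \<omega> = (\<Sum>i<n. 2 * \<omega> (int i) - 1)"

lemma rademacher_sum_measurable[measurable]: "rademacher_sum n \<in> borel_measurable Bern"
  unfolding rademacher_sum_def by measurable

lemma rademacher_bound: "\<omega> \<in> space Bern \<Longrightarrow> \<bar>2 * \<omega> k - 1\<bar> \<le> (1::real)"
  by (drule coordinate_01[of _ k]) auto

lemma rademacher_sum_bound:
  assumes \<omega>: "\<omega> \<in> space Bern"
  shows "\<bar>rademacher_sum n \<omega>\<bar> \<le> real n"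
proof -
  have "\<bar>rademacher_sum n \<omega>\<bar> \<le> (\<Sum>i<n. \<bar>2 * \<omega> (int i) - 1\<bar>)"
    unfolding rademacher_sum_def by (rule sum_abs)
  also have "\<dots> \<le> (\<Sum>i<n. 1)" by (rule sum_mono) (use rademacher_bound[OF \<omega>] in auto)
  finally show ?thesis by simp
qed

lemma integral_rademacher_product:
  "(\<integral>\<omega>. (2 * \<omega> i - 1) * (2 * \<omega> j - 1) \<partial>Bern) = (if i = j then 1 else 0)"
proof (cases "i = j")
  case True
  have "(2 * \<omega> i - 1) * (2 * \<omega> i - 1) = 1" if "\<omega> \<in> space Bern" for \<omega>
    using coordinate_01[OF that, of i] by auto
  then have "(\<integral>\<omega>. (2 * \<omega> i - 1) * (2 * \<omega> i - 1) \<partial>Bern) = (\<integral>\<omega>. 1 \<partial>Bern)"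
    by (intro Bochner_Integration.integral_cong) auto
  with True show ?thesis by (simp add: P.prob_space)
next
  case False
  have int: "integrable Bern (\<lambda>\<omega>. 2 * \<omega> k - 1)" for k
    by (rule integrable_bounded[where C=1]) (auto simp: rademacher_bound)
  have "(\<integral>\<omega>. (2 * \<omega> i - 1) * (2 * \<omega> j - 1) \<partial>Bern)
      = (\<integral>\<omega>. 2 * \<omega> i - 1 \<partial>Bern) * (\<integral>\<omega>. 2 * \<omega> j - 1 \<partial>Bern)"
    using False coordinate_fun_in_coord_sets[of "\<lambda>x. 2 * x - 1"]
    by (intro integral_mult_indep_coords[of "{i}" "{j}"] int) auto
  also have "\<dots> = 0" using integral_coordinate[of "\<lambda>x. 2 * x - 1" i] by simp
  finally show ?thesis using False by simp
qed

lemma integral_rademacher_sum_sq: "(\<integral>\<omega>. (rademacher_sum n \<omega>)\<^sup>2 \<partial>Bern) = real n"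
proof -
  have int: "integrable Bern (\<lambda>\<omega>. (2 * \<omega> i - 1) * (2 * \<omega> j - 1))" for i j
    using rademacher_bound
    by (intro integrable_bounded[where C=1]) (auto simp: abs_mult intro: mult_le_one)
  have "(\<integral>\<omega>. (rademacher_sum n \<omega>)\<^sup>2 \<partial>Bern)
      = (\<integral>\<omega>. (\<Sum>i<n. \<Sum>j<n. (2 * \<omega> (int i) - 1) * (2 * \<omega> (int j) - 1)) \<partial>Bern)"
    unfolding rademacher_sum_def power2_eq_square sum_product ..
  also have "\<dots> = (\<Sum>i<n. \<Sum>j<n. if int i = int j then 1 else 0)"
    by (simp add: integral_sum int integral_rademacher_product del: of_nat_eq_iff)
  finally show ?thesis by simp
qed

lemma Ssum_f_ex:
  assumes \<omega>: "\<omega> \<in> space Bern"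
  shows "Ssum (shift 1) f_ex n \<omega> = rademacher_sum n \<omega> + (cobound \<omega> - cobound (shift (int n) \<omega>))"
proof -
  have "Ssum (shift 1) f_ex n \<omega> = (\<Sum>i<n. incr (shift (int i) \<omega>)) + Ssum (shift 1) (\<lambda>x. f_ex x - incr x) n \<omega>"
    by (simp add: Ssum_def funpow_shift[OF \<omega>] sum.distrib[symmetric])
  also have "(\<Sum>i<n. incr (shift (int i) \<omega>)) = rademacher_sum n \<omega>"
    by (simp add: rademacher_sum_def incr_def shift_def)
  also have "Ssum (shift 1) (\<lambda>x. f_ex x - incr x) n \<omega> = cobound \<omega> - cobound ((shift 1 ^^ n) \<omega>)"
    by (rule Ssum_coboundary[OF measurable_shift _ \<omega>]) (simp add: f_ex_def)
  also have "(shift 1 ^^ n) \<omega> = shift (int n) \<omega>" by (rule funpow_shift[OF \<omega>])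
  finally show ?thesis .
qed

text \<open>Lower bound \<parallel>S_n f_ex\<parallel>_2 \<ge> \<surd>n/2, since (a + b)^2 \<ge> a^2/2 - b^2 and the error b is
  bounded by 1.\<close>
lemma L2norm_Ssum_f_ex_lower:
  assumes n: "n \<ge> 4"
  shows "sqrt (real n) / 2 \<le> L2norm Bern (Ssum (shift 1) f_ex n)"
proof -
  let ?S = "Ssum (shift 1) f_ex n" and ?a = "rademacher_sum n"
  have err: "\<bar>?S \<omega> - ?a \<omega>\<bar> \<le> 1" if \<omega>: "\<omega> \<in> space Bern" for \<omega>
    using Ssum_f_ex[OF \<omega>] cobound_bound[OF \<omega>] cobound_bound[OF shift_in_space[OF \<omega>, of "int n"]] by simp
  have pointwise: "(?a \<omega>)\<^sup>2 / 2 - 1 \<le> (?S \<omega>)\<^sup>2" if \<omega>: "\<omega> \<in> space Bern" for \<omega>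
  proof -
    have "(?S \<omega> - ?a \<omega>)\<^sup>2 \<le> 1" using power_mono[OF err[OF \<omega>] abs_ge_zero, of 2] by simp
    moreover have "0 \<le> (?a \<omega> + 2 * (?S \<omega> - ?a \<omega>))\<^sup>2" by simp
    ultimately show ?thesis by (simp add: power2_eq_square algebra_simps)
  qed
  have bounded_sq: "integrable Bern (\<lambda>\<omega>. (g \<omega>)\<^sup>2)"
    if g: "g \<in> borel_measurable Bern" and bound: "\<And>\<omega>. \<omega> \<in> space Bern \<Longrightarrow> \<bar>g \<omega>\<bar> \<le> C" for g and C :: real
  proof (rule integrable_bounded[where C="C\<^sup>2"])
    show "\<bar>(g \<omega>)\<^sup>2\<bar> \<le> C\<^sup>2" if "\<omega> \<in> space Bern" for \<omega>
      using power_mono[OF bound[OF that] abs_ge_zero, of 2] by simp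
  qed (use g in measurable)
  have int_a: "integrable Bern (\<lambda>\<omega>. (?a \<omega>)\<^sup>2)"
    by (rule bounded_sq[OF _ rademacher_sum_bound]) auto
  have "\<bar>?S \<omega>\<bar> \<le> real n + 1" if \<omega>: "\<omega> \<in> space Bern" for \<omega>
    using err[OF \<omega>] rademacher_sum_bound[OF \<omega>, of n] by linarith
  then have int_S: "integrable Bern (\<lambda>\<omega>. (?S \<omega>)\<^sup>2)"
    by (intro bounded_sq Ssum_measurable) auto
  have "real n / 2 - 1 = (\<integral>\<omega>. (?a \<omega>)\<^sup>2 / 2 - 1 \<partial>Bern)"
    using int_a by (simp add: integral_rademacher_sum_sq P.prob_space)
  also have "\<dots> \<le> (\<integral>\<omega>. (?S \<omega>)\<^sup>2 \<partial>Bern)"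
    using int_a int_S pointwise by (intro integral_mono) auto
  finally have "real n / 4 \<le> (\<integral>\<omega>. (?S \<omega>)\<^sup>2 \<partial>Bern)" using n by simp
  then have "sqrt (real n / 4) \<le> L2norm Bern ?S" unfolding L2norm_def by simp
  then show ?thesis by (simp add: real_sqrt_divide)
qed

lemma f_ex_no_martingale_approx: "\<not> martingale_approx Bern (shift 1) f_ex nat_filt"
proof
  assume "martingale_approx Bern (shift 1) f_ex nat_filt"
  moreover have "sets (nat_filt (-1)) = sets (nat_filt 0)"
    unfolding sets_nat_filt using past_gen_const by (intro sigma_sets_eqI) (auto intro: sigma_sets.Basic)
  ultimately have "(\<lambda>n. L2norm Bern (Ssum (shift 1) f_ex n) / sqrt (real n)) \<longlonglongrightarrow> 0"
    using P.martingale_approx_constant_filtration[OF is_filtration_nat_filt _ measurable_shift distr_shift]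
    by auto
  then have "eventually (\<lambda>n. L2norm Bern (Ssum (shift 1) f_ex n) / sqrt (real n) < 1/2) sequentially"
    by (rule order_tendstoD) simp
  moreover have "eventually (\<lambda>n. 1/2 \<le> L2norm Bern (Ssum (shift 1) f_ex n) / sqrt (real n)) sequentially"
    using eventually_ge_at_top[of 4] by eventually_elim (use L2norm_Ssum_f_ex_lower in \<open>simp add: field_simps\<close>)
  ultimately have "eventually (\<lambda>n::nat. False) sequentially" by eventually_elim simp
  then show False by simp
qed

definition coord_filt :: "int \<Rightarrow> (int \<Rightarrow> real) measure" where
  "coord_filt j = sigma (space Bern) (coord_gen {..j})"

lemma sets_coord_filt: "sets (coord_filt j) = coord_sets {..j}"
  unfolding coord_filt_def coord_sets_def by (rule sets_measure_of[OF coord_gen_Pow])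

lemma space_coord_filt: "space (coord_filt j) = space Bern"
  unfolding coord_filt_def by (simp add: space_measure_of_conv)

lemma is_filtration_coord_filt: "is_filtration Bern coord_filt"
  unfolding is_filtration_def subalgebra_def
  using coord_sets_subset coord_sets_mono
  by (auto simp: sets_coord_filt space_coord_filt)

lemma coord_filt_shift:
  "sets (coord_filt j) = {Tpow (space Bern) (shift 1) j -` A \<inter> space Bern | A. A \<in> sets (coord_filt 0)}"
proof -
  have "Tpow (space Bern) (shift 1) j -` A \<inter> space Bern = shift j -` A \<inter> space Bern" for A
    by (auto simp: Tpow_shift)
  moreover have "(\<lambda>i. i + j) ` {..0} = {..j}"
    by (auto intro!: image_eqI[where x="_ - j"])
  ultimately show ?thesis
    using coord_sets_shift[of j "{..0}"] by (simp add: sets_coord_filt)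
qed

lemma measurable_coord_filt:
  assumes "g \<in> borel_measurable (coord_filt j)" "B \<in> sets borel"
  shows "g -` B \<inter> space Bern \<in> coord_sets {..j}"
  using measurable_sets[OF assms] by (simp add: sets_coord_filt space_coord_filt)

lemma f_ex_martingale_approx: "martingale_approx Bern (shift 1) f_ex coord_filt"
  unfolding martingale_approx_def
proof (intro exI conjI ballI)
  have incr_sets: "incr -` B \<inter> space Bern \<in> coord_sets {0}" for B
    using coordinate_fun_in_coord_sets[of "\<lambda>x. 2 * x - 1" 0 B] by (simp add: incr_def[abs_def])
  have incr_bound: "\<bar>incr \<omega>\<bar> \<le> 1" if "\<omega> \<in> space Bern" for \<omega>
    using rademacher_bound[OF that] by (simp add: incr_def)
  have "incr \<in> borel_measurable (coord_filt 0)"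
    using incr_sets coord_sets_mono[of "{0}" "{..0}"]
    by (intro measurableI) (auto simp: sets_coord_filt space_coord_filt)
  moreover have "\<bar>(incr \<omega>)\<^sup>2\<bar> \<le> 1" if "\<omega> \<in> space Bern" for \<omega>
    using power_mono[OF incr_bound[OF that] abs_ge_zero, of 2] by simp
  ultimately show "incr \<in> L2 Bern (coord_filt 0)"
    unfolding L2_def by (auto intro: integrable_bounded[where C=1])
  fix g assume "g \<in> L2 Bern (coord_filt (-1))"
  then have g: "g \<in> borel_measurable (coord_filt (-1))" "integrable Bern (\<lambda>x. (g x)\<^sup>2)"
    unfolding L2_def by auto
  have g_sets: "g -` B \<inter> space Bern \<in> coord_sets {..-1}" if "B \<in> sets borel" for B
    using measurable_coord_filt[OF g(1) that] .
  have "integrable Bern g"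
    using P.square_integrable_imp_integrable[OF borel_measurable_of_coord_sets[OF g_sets] g(2)] .
  moreover have "integrable Bern incr" using incr_bound by (intro integrable_bounded) auto
  ultimately have "(\<integral>x. incr x * g x \<partial>Bern) = (\<integral>x. incr x \<partial>Bern) * (\<integral>x. g x \<partial>Bern)"
    using incr_sets g_sets by (intro integral_mult_indep_coords[of "{0}" "{..-1}"]) auto
  also have "(\<integral>x. incr x \<partial>Bern) = 0"
    using integral_coordinate[of "\<lambda>x. 2 * x - 1" 0] by (simp add: incr_def)
  finally show "(\<integral>x. incr x * g x \<partial>Bern) = 0" by simp
next
  show "(\<lambda>n. L2norm Bern (Ssum (shift 1) (\<lambda>x. f_ex x - incr x) n) / sqrt (real n)) \<longlonglongrightarrow> 0"
  proof (rule P.coboundary_negligible[OF measurable_shift cobound_measurable cobound_bound])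
    show "f_ex \<omega> - incr \<omega> = cobound \<omega> - cobound (shift 1 \<omega>)" for \<omega>
      by (simp add: f_ex_def)
  qed
qed

theorem proposition2:
  "\<exists>(M :: (int \<Rightarrow> real) measure) T f F.
     prob_space M \<and> invertible_mpt M T \<and> ergodic M T \<and>
     f \<in> L2 M M \<and>
     is_filtration M F \<and>
     (\<forall>j. sets (F j) = {Tpow (space M) T j -` A \<inter> space M | A. A \<in> sets (F 0)}) \<and>
     \<not> regular M f (natural_filtration M T f) \<and>
     \<not> martingale_approx M T f (natural_filtration M T f) \<and>
     martingale_approx M T f F"
  using prob_space_Bern invertible_mpt_shift ergodic_shift f_ex_L2 is_filtration_coord_filt
    coord_filt_shift f_ex_not_regular f_ex_no_martingale_approx f_ex_martingale_approx
  by blast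

end
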